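(* Let $X$ be a real reflexive Banach space satisfying (CFPP). Let $F = \bigcap_{k=1}^\infty F_k$, where for each $k$, $F_k = \{x \in X : f_k(x) \le d_k\}$ with $f_k \in X^*$, $\|f_k\| = 1$, $d_k \ge 0$, and $F_k$ is a contractive set. For each $k$ let $y_k \in X$ with $f_k(y_k) = 1$ be such that $P_k x = x - f_k(x) y_k$ defines a linear projection of norm one from $X$ onto $\ker(f_k)$. If $0 \notin \mathrm{cl}(\mathrm{conv}(\{y_k\}_{k \in \mathbb{N}}))$, then $F$ is a contractive set.
   Context: A real Banach space $X$ has (CFPP) if for every non-empty, convex, closed and bounded set $D \subset X$ and every nonexpansive mapping $T : X \to X$ (i.e. $\|Tx - Ty\| \le \|x-y\|$) with $T(D) \subset D$, $T$ has a fixed point in $D$. A non-empty set $D \subset X$ is contractive if there exists $P : X \to D$ with $P|_D = \mathrm{id}_D$ and $\|Px - Py\| \le \|x-y\|$ for all $x,y \in X$. $\mathrm{cl}(\mathrm{conv}(\cdot))$ is the norm-closed convex hull. *)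

theory Defs
  imports "HOL-Analysis.Analysis"
begin

definition nonexpansive :: "('a::real_normed_vector \<Rightarrow> 'a) \<Rightarrow> bool" where
  "nonexpansive T \<longleftrightarrow> (\<forall>x y. norm (T x - T y) \<le> norm (x - y))"

text \<open>Reflexivity: the canonical embedding of X into its bidual is surjective
  (it is always an isometric linear injection).\<close>
definition reflexive_space :: "'a::banach itself \<Rightarrow> bool" where
  "reflexive_space (_::'a itself) \<longleftrightarrow>
     (\<forall>\<phi> :: ('a \<Rightarrow>\<^sub>L real) \<Rightarrow>\<^sub>L real. \<exists>x::'a. \<forall>f. blinfun_apply \<phi> f = blinfun_apply f x)"

definition CFPP :: "'a::real_normed_vector itself \<Rightarrow> bool" where
  "CFPP (_::'a itself) \<longleftrightarrow>
     (\<forall>(D::'a set) T. D \<noteq> {} \<and> convex D \<and> closed D \<and> bounded D \<and>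
        nonexpansive T \<and> T ` D \<subseteq> D \<longrightarrow> (\<exists>x\<in>D. T x = x))"

definition contractive_set :: "'a::real_normed_vector set \<Rightarrow> bool" where
  "contractive_set D \<longleftrightarrow> D \<noteq> {} \<and>
     (\<exists>P. (\<forall>x. P x \<in> D) \<and> (\<forall>x\<in>D. P x = x) \<and> nonexpansive P)"

end

theory Submission
  imports Defs
begin

text \<open>The map \<open>Q\<^sub>k x = x - max 0 (f\<^sub>k x - d\<^sub>k) y\<^sub>k\<close> is a nonexpansive retraction onto the
  half-space \<open>F\<^sub>k\<close>: \<open>Q\<^sub>k x - Q\<^sub>k z\<close> is a convex combination of \<open>x - z\<close> and \<open>P\<^sub>k (x - z)\<close>.
  Compose these retractions along a sequence of indices visiting every \<open>k\<close> infinitely often.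
  After \<open>n\<close> steps \<open>x\<close> has moved by \<open>\<Sum>\<^sub>m t\<^sub>m y\<^bsub>k(m)\<^esub>\<close> with \<open>t\<^sub>m \<ge> 0\<close>, and this
  displacement stays bounded because the compositions are nonexpansive and fix \<open>F\<close>. Since \<open>0\<close>
  is not in the closed convex hull of the \<open>y\<^sub>k\<close>, a bounded nonnegative combination of them has
  bounded total weight, so \<open>\<Sum> t\<^sub>m\<close> converges. Hence the compositions converge pointwise, and
  the limit is a nonexpansive retraction onto \<open>F\<close>.\<close>

lemma mult_sum_le_norm_sum_scaleR:
  fixes v :: "nat \<Rightarrow> 'a::real_normed_vector"
  assumes hull_ge: "\<And>c. c \<in> convex hull A \<Longrightarrow> e \<le> norm c"
    and t_nonneg: "\<And>m. 0 \<le> t m" and v_in: "\<And>m. v m \<in> A"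
  shows "e * (\<Sum>m<n. t m) \<le> norm (\<Sum>m<n. t m *\<^sub>R v m)"
proof (cases "(\<Sum>m<n. t m) = 0")
  case False
  define S where "S = (\<Sum>m<n. t m)"
  have "S > 0"
    using False t_nonneg by (simp add: S_def order_less_le sum_nonneg)
  have "(\<Sum>m<n. (t m / S) *\<^sub>R v m) \<in> convex hull A"
    using \<open>S > 0\<close> t_nonneg v_in
    by (intro convex_sum convex_convex_hull)
      (auto simp: S_def sum_divide_distrib[symmetric] intro: hull_inc)
  then have "e \<le> norm ((1 / S) *\<^sub>R (\<Sum>m<n. t m *\<^sub>R v m))"
    using hull_ge by (simp add: scaleR_sum_right)
  with \<open>S > 0\<close> show ?thesis
    by (simp add: S_def[symmetric] divide_simps mult.commute)
qed simp

lemma summable_scaleR_if_bounded_partial_sums: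
  fixes v :: "nat \<Rightarrow> 'a::banach"
  assumes "0 \<notin> closure (convex hull A)" and "bounded A"
    and t_nonneg: "\<And>m. 0 \<le> t m" and v_in: "\<And>m. v m \<in> A"
    and partial_sums_le: "\<And>n. norm (\<Sum>m<n. t m *\<^sub>R v m) \<le> B"
  shows "summable (\<lambda>m. t m *\<^sub>R v m)"
proof -
  obtain e where "e > 0" and hull_ge: "\<And>c. c \<in> convex hull A \<Longrightarrow> e \<le> norm c"
    using \<open>0 \<notin> closure (convex hull A)\<close>
    by (force simp: closure_approachable dist_norm not_less)
  obtain C where C: "\<And>a. a \<in> A \<Longrightarrow> norm a \<le> C"
    using \<open>bounded A\<close> by (auto simp: bounded_iff)
  have "(\<Sum>m<n. t m) \<le> B / e" for n
    using mult_sum_le_norm_sum_scaleR[where t = t and v = v and n = n, OF hull_ge t_nonneg v_in]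
      partial_sums_le[of n] \<open>e > 0\<close>
    by (simp add: field_simps)
  then have "summable t"
    by (rule summableI_nonneg_bounded[OF t_nonneg])
  moreover have "norm (norm (t m *\<^sub>R v m)) \<le> t m * C" for m
    using t_nonneg[of m] C[OF v_in[of m]] by (simp add: mult_left_mono)
  ultimately have "summable (\<lambda>m. norm (t m *\<^sub>R v m))"
    by (rule summable_comparison_test'[OF summable_mult2])
  then show ?thesis
    by (rule summable_norm_cancel)
qed

lemma closed_limit_frequently_in:
  assumes "closed S" and "(X \<longlongrightarrow> l) F" and "frequently (\<lambda>n. X n \<in> S) F"
  shows "l \<in> S"
proof (rule ccontr)
  assume "l \<notin> S"
  with assms(1,2) have "eventually (\<lambda>n. X n \<in> - S) F"
    by (intro topological_tendstoD) auto
  with assms(3) show False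
    by (simp add: frequently_def)
qed

lemma nonexpansive_fold:
  assumes "\<And>m. nonexpansive (Q m)"
  shows "nonexpansive (fold Q xs)"
  using assms unfolding nonexpansive_def
  by (induction xs) (simp, metis fold_Cons comp_apply order_trans)

lemma nonexpansive_pointwise_limit:
  assumes "\<And>n. nonexpansive (R n)" and "\<And>x. (\<lambda>n. R n x) \<longlonglongrightarrow> L x"
  shows "nonexpansive L"
  unfolding nonexpansive_def
proof (intro allI)
  fix x z :: 'a
  have "(\<lambda>n. norm (R n x - R n z)) \<longlonglongrightarrow> norm (L x - L z)"
    by (intro tendsto_norm tendsto_diff assms(2))
  then show "norm (L x - L z) \<le> norm (x - z)"
    by (rule LIMSEQ_le_const2) (use assms(1) in \<open>auto simp: nonexpansive_def\<close>)
qed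

lemma fold_fixed_point:
  assumes "\<And>m. Q m p = p"
  shows "fold Q xs p = p"
  using assms by (induction xs) simp_all

lemma norm_sub_scaleR_le_if_onorm_le_1:
  fixes f :: "'a::real_normed_vector \<Rightarrow>\<^sub>L real"
  assumes "onorm (\<lambda>x. x - f x *\<^sub>R y) \<le> 1"
  shows "norm (u - f u *\<^sub>R y) \<le> norm u"
proof -
  have "bounded_linear (\<lambda>x. x - f x *\<^sub>R y)"
    by (intro bounded_linear_sub bounded_linear_ident bounded_linear_scaleR_const
        blinfun.bounded_linear_right)
  from order_trans[OF onorm[OF this] mult_right_mono[OF assms norm_ge_zero]] show ?thesis
    by simp
qed

lemma norm_le_2_if_norm_sub_scaleR_le:
  fixes f :: "'a::real_normed_vector \<Rightarrow>\<^sub>L real"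
  assumes "norm f = 1" and proj: "\<And>u. norm (u - f u *\<^sub>R y) \<le> norm u"
  shows "norm y \<le> 2"
proof (cases "y = 0")
  case False
  have "norm (f x) \<le> 2 / norm y * norm x" for x
  proof -
    have "\<bar>f x\<bar> * norm y = norm (x - (x - f x *\<^sub>R y))"
      by simp
    also have "\<dots> \<le> norm x + norm (x - f x *\<^sub>R y)"
      by (rule norm_triangle_ineq4)
    also have "\<dots> \<le> 2 * norm x"
      using proj[of x] by simp
    finally show ?thesis
      using False by (simp add: divide_simps mult.commute)
  qed
  then have "norm f \<le> 2 / norm y"
    by (intro norm_blinfun_bound) simp_all
  with \<open>norm f = 1\<close> False show ?thesis
    by (simp add: divide_simps)
qed simp

definition halfspace_retraction :: "('a::real_normed_vector \<Rightarrow>\<^sub>L real) \<Rightarrow> real \<Rightarrow> 'a \<Rightarrow> 'a \<Rightarrow> 'a"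
  where "halfspace_retraction f d y x = x - max 0 (f x - d) *\<^sub>R y"

lemma halfspace_retraction_eq_self [simp]:
  fixes f :: "'a::real_normed_vector \<Rightarrow>\<^sub>L real"
  shows "f x \<le> d \<Longrightarrow> halfspace_retraction f d y x = x"
  by (simp add: halfspace_retraction_def)

lemma halfspace_retraction_le:
  fixes f :: "'a::real_normed_vector \<Rightarrow>\<^sub>L real"
  shows "f y = 1 \<Longrightarrow> f (halfspace_retraction f d y x) \<le> d"
  by (simp add: halfspace_retraction_def blinfun.diff_right blinfun.scaleR_right)

lemma max_0_diff_eq_mult:
  fixes a b d :: real
  obtains l where "0 \<le> l" and "l \<le> 1" and "max 0 (a - d) - max 0 (b - d) = l * (a - b)"
proof (cases "a = b")
  case True
  show ?thesis
    by (rule that[of 0]) (simp_all add: True)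
next
  case False
  define l where "l = (max 0 (a - d) - max 0 (b - d)) / (a - b)"
  show ?thesis
  proof (rule that[of l])
    show "0 \<le> l"
      using False by (auto simp: l_def max_def zero_le_divide_iff)
    show "l \<le> 1"
      using False by (auto simp: l_def max_def divide_le_eq_1)
    show "max 0 (a - d) - max 0 (b - d) = l * (a - b)"
      using False by (simp add: l_def)
  qed
qed

lemma nonexpansive_halfspace_retraction:
  fixes f :: "'a::real_normed_vector \<Rightarrow>\<^sub>L real"
  assumes proj: "\<And>u. norm (u - f u *\<^sub>R y) \<le> norm u"
  shows "nonexpansive (halfspace_retraction f d y)"
  unfolding nonexpansive_def
proof (intro allI)
  fix x z :: 'a
  define u where "u = x - z"
  obtain l where "0 \<le> l" and "l \<le> 1" and l: "max 0 (f x - d) - max 0 (f z - d) = l * f u"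
    using max_0_diff_eq_mult[of "f x" d "f z"] by (auto simp: u_def blinfun.diff_right)
  have "halfspace_retraction f d y x - halfspace_retraction f d y z
      = u - (max 0 (f x - d) - max 0 (f z - d)) *\<^sub>R y"
    by (simp add: halfspace_retraction_def u_def algebra_simps)
  also have "\<dots> = (1 - l) *\<^sub>R u + l *\<^sub>R (u - f u *\<^sub>R y)"
    by (simp add: l algebra_simps)
  finally have diff: "halfspace_retraction f d y x - halfspace_retraction f d y z
      = (1 - l) *\<^sub>R u + l *\<^sub>R (u - f u *\<^sub>R y)" .
  have "norm ((1 - l) *\<^sub>R u + l *\<^sub>R (u - f u *\<^sub>R y))
      \<le> (1 - l) * norm u + l * norm (u - f u *\<^sub>R y)"
    by (rule order_trans[OF norm_triangle_ineq]) (use \<open>0 \<le> l\<close> \<open>l \<le> 1\<close> in simp)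
  also have "\<dots> \<le> (1 - l) * norm u + l * norm u"
    using proj[of u] \<open>0 \<le> l\<close> by (simp add: mult_left_mono)
  also have "\<dots> = norm u"
    by (simp add: algebra_simps)
  finally show "norm (halfspace_retraction f d y x - halfspace_retraction f d y z) \<le> norm (x - z)"
    by (simp add: diff u_def)
qed

lemma convergent_fold_halfspace_retractions:
  fixes g :: "nat \<Rightarrow> 'a::banach \<Rightarrow>\<^sub>L real"
  assumes p: "\<And>m. g m p \<le> c m"
    and proj: "\<And>m u. norm (u - g m u *\<^sub>R v m) \<le> norm u"
    and v_in: "\<And>m. v m \<in> A" and "bounded A" and "0 \<notin> closure (convex hull A)"
  shows "convergent (\<lambda>n. fold (\<lambda>m. halfspace_retraction (g m) (c m) (v m)) [0..<n] x)"
proof -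
  define R where "R n = fold (\<lambda>m. halfspace_retraction (g m) (c m) (v m)) [0..<n]" for n
  define t where "t m = max 0 (g m (R m x) - c m)" for m
  have R_eq: "R n x = x - (\<Sum>m<n. t m *\<^sub>R v m)" for n
    by (induction n) (simp_all add: R_def t_def halfspace_retraction_def)
  have "nonexpansive (R n)" for n
    unfolding R_def by (intro nonexpansive_fold nonexpansive_halfspace_retraction proj)
  moreover have "R n p = p" for n
    unfolding R_def by (intro fold_fixed_point halfspace_retraction_eq_self p)
  ultimately have R_closer: "norm (R n x - p) \<le> norm (x - p)" for n
    unfolding nonexpansive_def by metis
  have "norm (\<Sum>m<n. t m *\<^sub>R v m) \<le> 2 * norm (x - p)" for n
  proof -
    have "(\<Sum>m<n. t m *\<^sub>R v m) = (x - p) - (R n x - p)"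
      by (simp add: R_eq)
    with norm_triangle_ineq4[of "x - p" "R n x - p"] R_closer[of n] show ?thesis
      by simp
  qed
  then have "summable (\<lambda>m. t m *\<^sub>R v m)"
    by (intro summable_scaleR_if_bounded_partial_sums[OF \<open>0 \<notin> closure (convex hull A)\<close>
          \<open>bounded A\<close> _ v_in]) (simp_all add: t_def)
  then have "(\<lambda>n. R n x) \<longlonglongrightarrow> x - (\<Sum>m. t m *\<^sub>R v m)"
    unfolding R_eq by (intro tendsto_diff tendsto_const summable_LIMSEQ)
  then show ?thesis
    by (auto simp: R_def convergent_def)
qed

lemma contractive_set_Inter_halfspaces:
  fixes f :: "nat \<Rightarrow> 'a::banach \<Rightarrow>\<^sub>L real"
  assumes "(\<Inter>k. {x. f k x \<le> d k}) \<noteq> {}"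
    and fy: "\<And>k. f k (y k) = 1"
    and proj: "\<And>k u. norm (u - f k u *\<^sub>R y k) \<le> norm u"
    and "bounded (range y)" and "0 \<notin> closure (convex hull (range y))"
  shows "contractive_set (\<Inter>k. {x. f k x \<le> d k})" (is "contractive_set ?F")
proof -
  obtain p where p: "p \<in> ?F"
    using assms(1) by blast
  \<comment> \<open>\<open>idx\<close> takes every value infinitely often, so every half-space is visited infinitely often\<close>
  define idx where "idx m = fst (prod_decode m)" for m
  define R where "R n = fold (\<lambda>m. halfspace_retraction (f (idx m)) (d (idx m)) (y (idx m))) [0..<n]"
    for n
  define L where "L x = lim (\<lambda>n. R n x)" for x
  have R_L: "(\<lambda>n. R n x) \<longlonglongrightarrow> L x" for x
  proof -
    have "convergent (\<lambda>n. R n x)"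
      unfolding R_def using p assms(4,5)
      by (intro convergent_fold_halfspace_retractions[where p = p and A = "range y"] proj) auto
    then show ?thesis
      by (simp add: L_def convergent_LIMSEQ_iff)
  qed
  have "nonexpansive L"
    by (rule nonexpansive_pointwise_limit[OF _ R_L])
      (unfold R_def, intro nonexpansive_fold nonexpansive_halfspace_retraction proj)
  moreover have "L q = q" if "q \<in> ?F" for q
  proof -
    have "R n q = q" for n
      unfolding R_def using that by (intro fold_fixed_point halfspace_retraction_eq_self) auto
    then have "(\<lambda>n. R n q) \<longlonglongrightarrow> q"
      by simp
    from LIMSEQ_unique[OF R_L this] show ?thesis .
  qed
  moreover have "L x \<in> {z. f k z \<le> d k}" for x k
  proof (rule closed_limit_frequently_in[OF _ R_L])
    show "closed {z. f k z \<le> d k}"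
      by (intro closed_Collect_le continuous_intros)
    have "R (Suc (prod_encode (k, N))) x \<in> {z. f k z \<le> d k}" for N
      using fy by (simp add: R_def idx_def halfspace_retraction_le)
    then show "frequently (\<lambda>n. R n x \<in> {z. f k z \<le> d k}) sequentially"
      unfolding frequently_sequentially by (meson le_SucI le_prod_encode_2)
  qed
  ultimately show ?thesis
    unfolding contractive_set_def using p by blast
qed

theorem theorem22:
  fixes f :: "nat \<Rightarrow> ('a::banach \<Rightarrow>\<^sub>L real)"
    and d :: "nat \<Rightarrow> real"
    and y :: "nat \<Rightarrow> 'a"
  assumes "reflexive_space TYPE('a)"
    and "CFPP TYPE('a)"
    and "\<And>k. norm (f k) = 1"
    and "\<And>k. d k \<ge> 0"
    and "\<And>k. contractive_set {x. blinfun_apply (f k) x \<le> d k}"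
    and "\<And>k. blinfun_apply (f k) (y k) = 1"
    and "\<And>k. onorm (\<lambda>x. x - blinfun_apply (f k) x *\<^sub>R y k) = 1"
    and "0 \<notin> closure (convex hull (range y))"
  shows "contractive_set (\<Inter>k. {x. blinfun_apply (f k) x \<le> d k})"
proof (rule contractive_set_Inter_halfspaces)
  show proj: "norm (u - f k u *\<^sub>R y k) \<le> norm u" for k u
    by (rule norm_sub_scaleR_le_if_onorm_le_1) (simp add: assms(7))
  show "bounded (range y)"
    using norm_le_2_if_norm_sub_scaleR_le[OF assms(3) proj] unfolding bounded_iff by blast
  have "0 \<in> (\<Inter>k. {x. f k x \<le> d k})"
    using assms(4) by simp
  then show "(\<Inter>k. {x. f k x \<le> d k}) \<noteq> {}"
    by blast
qed (use assms(6,8) in auto)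

end
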